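(* Assume $\nu_0\ge 2$. The sets $\mathcal{V}_i^1$, $i\in[1,\nu_0]$, are pairwise disjoint cycles contained in $\overline{\Omega}$. Moreover, for each $i$, the bottom of $\mathcal{V}_i^1$ is $\mathcal{F}(\mathcal{V}_i^1)=\mathcal{P}_i^1$, and its depth is $\Gamma^{\mathcal{V}_i^1}=\Gamma_i^1$.
   Context: Let $\Omega$ be a finite set equipped with a connected undirected graph structure; write $\eta\sim\xi$ if $\{\eta,\xi\}$ is an edge. Let $\mathbb{H}:\Omega\to\mathbb{R}$ be a function. A path $\omega:\eta\to\xi$ is a sequence $\omega=(\omega_n)_{n=0}^N$ with $\omega_0=\eta$, $\omega_N=\xi$ and $\omega_n\sim\omega_{n+1}$ for all $n$; $N=0$ is allowed. Its height is $\Phi_\omega:=\max_{0\le n\le N}\mathbb{H}(\omega_n)$. The communication height is $\Phi(\eta,\xi):=\min_{\omega:\eta\to\xi}\Phi_\omega$. For nonempty sets $\mathcal{A},\mathcal{B}$, write $\Phi(\mathcal{A},\mathcal{B}):=\min_{\eta\in\mathcal{A},\xi\in\mathcal{B}}\Phi(\eta,\xi)$ and $\Phi(\mathcal{A},\eta):=\Phi(\mathcal{A},\{\eta\})$. Let $\mathcal{S}:=\operatorname{argmin}_\Omega\mathbb{H}$ be the set of ground states. Define $\overline{\Phi}:=\max_{s,s'\in\mathcal{S}}\Phi(s,s')$ and $\overline{\Omega}:=\{\eta\in\Omega:\Phi(\mathcal{S},\eta)\le\overline{\Phi}\}$. For $\mathcal{A}\subseteq\Omega$, define $\mathcal{F}(\mathcal{A}):=\operatorname{argmin}_{\mathcal{A}}\mathbb{H}$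 and $\partial\mathcal{A}:=\{\eta\notin\mathcal{A}:\eta\sim\xi\text{ for some }\xi\in\mathcal{A}\}$. A set $\mathcal{A}$ is connected if any two of its points are joined by a path lying inside $\mathcal{A}$. A stable plateau is a nonempty connected set $\mathcal{P}$ on which $\mathbb{H}$ is constant, with value $\mathbb{H}(\mathcal{P})$, such that $\mathbb{H}(\zeta)>\mathbb{H}(\mathcal{P})$ for all $\zeta\in\partial\mathcal{P}$. A cycle is a nonempty connected set $\mathcal{C}$ with $\max_{\mathcal{C}}\mathbb{H}<\min_{\partial\mathcal{C}}\mathbb{H}$. Its depth is $\Gamma^{\mathcal{C}}:=\min_{\partial\mathcal{C}}\mathbb{H}-\min_{\mathcal{C}}\mathbb{H}$. Let $\mathscr{P}^1=\{\mathcal{P}_1^1,\dots,\mathcal{P}_{\nu_0}^1\}$ be the collection of all stable plateaux contained in $\overline{\Omega}$. For $i\in[1,\nu_0]$, set $\breve{\mathcal{P}}_i^1:=\bigcup_{j\ne i}\mathcal{P}_j^1$. Define the initial depth $\Gamma_i^1:=\Phi(\mathcal{P}_i^1,\breve{\mathcal{P}}_i^1)-\mathbb{H}(\mathcal{P}_i^1)$ and the set $\mathcal{V}_i^1:=\{\eta\in\Omega:\Phi(\mathcal{P}_i^1,\eta)-\mathbb{H}(\mathcal{P}_i^1)<\Gamma_i^1\}$. Here $[a,b]$ denotes the set of integers from $a$ to $b$. *)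

theory Defs
  imports Complex_Main
begin

text \<open>Energy landscape on a finite graph. The vertex set is the finite type 'a,
 the edge relation is E (symmetric), the Hamiltonian is H.\<close>

definition is_path :: "('a \<Rightarrow> 'a \<Rightarrow> bool) \<Rightarrow> 'a list \<Rightarrow> 'a \<Rightarrow> 'a \<Rightarrow> bool" where
  "is_path E w x y \<longleftrightarrow> w \<noteq> [] \<and> hd w = x \<and> last w = y \<and>
     (\<forall>n. Suc n < length w \<longrightarrow> E (w ! n) (w ! Suc n))"

definition path_height :: "('a \<Rightarrow> real) \<Rightarrow> 'a list \<Rightarrow> real" where
  "path_height H w = Max (H ` set w)"

definition graph_connected :: "('a \<Rightarrow> 'a \<Rightarrow> bool) \<Rightarrow> bool" where
  "graph_connected E \<longleftrightarrow> (\<forall>x y. \<exists>w. is_path E w x y)"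

definition comm_height :: "('a \<Rightarrow> 'a \<Rightarrow> bool) \<Rightarrow> ('a \<Rightarrow> real) \<Rightarrow> 'a \<Rightarrow> 'a \<Rightarrow> real" where
  "comm_height E H x y = Min {path_height H w | w. is_path E w x y}"

definition comm_height_set :: "('a \<Rightarrow> 'a \<Rightarrow> bool) \<Rightarrow> ('a \<Rightarrow> real) \<Rightarrow> 'a set \<Rightarrow> 'a set \<Rightarrow> real" where
  "comm_height_set E H A B = Min {comm_height E H x y | x y. x \<in> A \<and> y \<in> B}"

definition ground_states :: "('a \<Rightarrow> real) \<Rightarrow> 'a set" where
  "ground_states H = {x. \<forall>y. H x \<le> H y}"

definition Phi_bar :: "('a \<Rightarrow> 'a \<Rightarrow> bool) \<Rightarrow> ('a \<Rightarrow> real) \<Rightarrow> real" where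
  "Phi_bar E H = Max {comm_height E H s s' | s s'. s \<in> ground_states H \<and> s' \<in> ground_states H}"

definition Omega_bar :: "('a \<Rightarrow> 'a \<Rightarrow> bool) \<Rightarrow> ('a \<Rightarrow> real) \<Rightarrow> 'a set" where
  "Omega_bar E H = {x. comm_height_set E H (ground_states H) {x} \<le> Phi_bar E H}"

definition bottom :: "('a \<Rightarrow> real) \<Rightarrow> 'a set \<Rightarrow> 'a set" where
  "bottom H A = {x \<in> A. \<forall>y \<in> A. H x \<le> H y}"

definition boundary :: "('a \<Rightarrow> 'a \<Rightarrow> bool) \<Rightarrow> 'a set \<Rightarrow> 'a set" where
  "boundary E A = {x. x \<notin> A \<and> (\<exists>y \<in> A. E x y)}"

definition set_connected :: "('a \<Rightarrow> 'a \<Rightarrow> bool) \<Rightarrow> 'a set \<Rightarrow> bool" where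
  "set_connected E A \<longleftrightarrow> (\<forall>x \<in> A. \<forall>y \<in> A. \<exists>w. is_path E w x y \<and> set w \<subseteq> A)"

text \<open>Value of H on a set where it is constant.\<close>
definition Hval :: "('a \<Rightarrow> real) \<Rightarrow> 'a set \<Rightarrow> real" where
  "Hval H P = H (SOME x. x \<in> P)"

definition stable_plateau :: "('a \<Rightarrow> 'a \<Rightarrow> bool) \<Rightarrow> ('a \<Rightarrow> real) \<Rightarrow> 'a set \<Rightarrow> bool" where
  "stable_plateau E H P \<longleftrightarrow> P \<noteq> {} \<and> set_connected E P \<and>
     (\<forall>x \<in> P. \<forall>y \<in> P. H x = H y) \<and> (\<forall>z \<in> boundary E P. H z > Hval H P)"

text \<open>Cycle: max over C strictly below min over the boundary (min of empty set = +infinity).\<close>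
definition is_cycle :: "('a \<Rightarrow> 'a \<Rightarrow> bool) \<Rightarrow> ('a \<Rightarrow> real) \<Rightarrow> 'a set \<Rightarrow> bool" where
  "is_cycle E H C \<longleftrightarrow> C \<noteq> {} \<and> set_connected E C \<and>
     (\<forall>x \<in> C. \<forall>z \<in> boundary E C. H x < H z)"

definition cycle_depth :: "('a \<Rightarrow> 'a \<Rightarrow> bool) \<Rightarrow> ('a \<Rightarrow> real) \<Rightarrow> 'a set \<Rightarrow> real" where
  "cycle_depth E H C = Min (H ` boundary E C) - Min (H ` C)"

definition plateaux1 :: "('a \<Rightarrow> 'a \<Rightarrow> bool) \<Rightarrow> ('a \<Rightarrow> real) \<Rightarrow> 'a set set" where
  "plateaux1 E H = {P. stable_plateau E H P \<and> P \<subseteq> Omega_bar E H}"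

definition breve1 :: "('a \<Rightarrow> 'a \<Rightarrow> bool) \<Rightarrow> ('a \<Rightarrow> real) \<Rightarrow> 'a set \<Rightarrow> 'a set" where
  "breve1 E H P = \<Union> (plateaux1 E H - {P})"

definition Gamma1 :: "('a \<Rightarrow> 'a \<Rightarrow> bool) \<Rightarrow> ('a \<Rightarrow> real) \<Rightarrow> 'a set \<Rightarrow> real" where
  "Gamma1 E H P = comm_height_set E H P (breve1 E H P) - Hval H P"

definition V1 :: "('a \<Rightarrow> 'a \<Rightarrow> bool) \<Rightarrow> ('a \<Rightarrow> real) \<Rightarrow> 'a set \<Rightarrow> 'a set" where
  "V1 E H P = {x. comm_height_set E H P {x} - Hval H P < Gamma1 E H P}"

end

theory Submission
  imports Defs
begin

text \<open>Let c = \<Phi>(P, other plateaux). Every point x of V = {x. \<Phi>(P, x) < c} is joined to P by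
  an optimal path, and that path stays in V; so V is connected, H < c on V, and any edge leaving
  V climbs to height at least c, which makes V a cycle. An optimal path from P to another plateau
  leaves V through a boundary point of height exactly c, which gives the depth. A minimiser of H
  on V lies in a flat component of V which is itself a stable plateau; since c \<le> Phi_bar this
  component lies in Omega_bar, and as the other plateaux lie outside V it must be P. Finally, a
  point common to two such sets would connect their plateaux below both levels.\<close>

section \<open>Paths\<close>

lemma is_path_iff_successively:
  "is_path E w x y \<longleftrightarrow> w \<noteq> [] \<and> hd w = x \<and> last w = y \<and> successively E w"
  unfolding is_path_def successively_conv_nth by blast

lemma is_path_singleton: "is_path E [x] x x"
  by (simp add: is_path_def)

lemma is_path_edge: "E x y \<Longrightarrow> is_path E [x, y] x y"
  by (simp add: is_path_iff_successively)

lemma is_path_ends_in_set: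
  assumes "is_path E w x y"
  shows "x \<in> set w" "y \<in> set w"
  using assms by (auto simp: is_path_def)

lemma is_path_append:
  assumes "is_path E w x y" "is_path E v y z"
  shows "is_path E (w @ tl v) x z"
proof -
  obtain v' where v: "v = y # v'"
    using assms(2) unfolding is_path_iff_successively by (cases v) auto
  then show ?thesis
    using assms unfolding is_path_iff_successively
    by (auto simp: successively_append_iff successively_Cons)
qed

lemma set_tl_subset: "set (tl v) \<subseteq> set v"
  by (cases v) auto

lemma is_path_rev:
  assumes sym: "\<And>x y. E x y \<Longrightarrow> E y x" and "is_path E w x y"
  shows "is_path E (rev w) y x"
proof -
  have "successively E w" using assms(2) unfolding is_path_iff_successively by simp
  then have "successively (\<lambda>a b. E b a) w" by (rule successively_mono) (use sym in blast)
  then show ?thesis using assms(2) unfolding is_path_iff_successively by (simp add: hd_rev last_rev)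
qed

lemma is_path_prefix:
  assumes "is_path E w x y" "z \<in> set w"
  obtains w' where "is_path E w' x z" "set w' \<subseteq> set w"
proof -
  obtain ys zs where w: "w = ys @ z # zs" using assms(2) by (meson split_list)
  have "successively E ((ys @ [z]) @ zs)"
    using assms(1) w unfolding is_path_iff_successively by simp
  then have "successively E (ys @ [z])" by (simp only: successively_append_iff)
  moreover have "hd (ys @ [z]) = x"
    using assms(1) w unfolding is_path_iff_successively by (cases ys) auto
  ultimately show ?thesis
    using that[of "ys @ [z]"] w unfolding is_path_iff_successively by auto
qed

lemma is_path_exit_edge:
  assumes "is_path E w x y" "x \<in> A" "y \<notin> A"
  obtains a b where "a \<in> A" "b \<notin> A" "E a b" "b \<in> set w"
  using assms
proof (induction w arbitrary: x)
  case Nil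
  then show ?case by (simp add: is_path_def)
next
  case (Cons a w')
  show ?case
  proof (cases w')
    case Nil
    then show ?thesis using Cons.prems by (auto simp: is_path_def)
  next
    case (Cons b w'')
    then have "E a b" "is_path E w' b y" "a = x"
      using Cons.prems(2) by (auto simp: is_path_iff_successively)
    then show ?thesis
      using Cons.IH[of b] Cons.prems(1,3,4) \<open>w' = b # w''\<close> by (cases "b \<in> A") auto
  qed
qed

lemma path_height_ge: "z \<in> set w \<Longrightarrow> H z \<le> path_height H w"
  by (auto simp: path_height_def intro!: Max_ge)

lemma path_height_le: "w \<noteq> [] \<Longrightarrow> (\<And>z. z \<in> set w \<Longrightarrow> H z \<le> t) \<Longrightarrow> path_height H w \<le> t"
  by (auto simp: path_height_def)

lemma path_height_mono:
  "w' \<noteq> [] \<Longrightarrow> set w' \<subseteq> set w \<Longrightarrow> path_height H w' \<le> path_height H w"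
  by (auto intro!: path_height_le path_height_ge)

lemma path_height_append_tl:
  "w \<noteq> [] \<Longrightarrow> path_height H (w @ tl v) \<le> max (path_height H w) (path_height H v)"
  using set_tl_subset[of v] path_height_ge[of _ w H] path_height_ge[of _ v H]
  by (intro path_height_le) fastforce+

lemma finite_path_heights: "finite {path_height H w | w. is_path E w x (y::'a::finite)}"
proof (rule finite_subset[of _ "range H"])
  have "path_height H w \<in> H ` set w" if "w \<noteq> []" for w
    unfolding path_height_def using that by (intro Max_in) auto
  then show "{path_height H w | w. is_path E w x y} \<subseteq> range H"
    by (fastforce simp: is_path_def)
qed simp

lemma comm_height_le_path_height:
  "is_path E w x (y::'a::finite) \<Longrightarrow> comm_height E H x y \<le> path_height H w"
  unfolding comm_height_def by (rule Min_le[OF finite_path_heights]) auto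

lemma comm_height_attained:
  assumes "graph_connected E"
  obtains w where "is_path E w x (y::'a::finite)" "path_height H w = comm_height E H x y"
proof -
  have "{path_height H w | w. is_path E w x y} \<noteq> {}"
    using assms unfolding graph_connected_def by auto
  then have "comm_height E H x y \<in> {path_height H w | w. is_path E w x y}"
    unfolding comm_height_def by (rule Min_in[OF finite_path_heights])
  then show ?thesis using that by auto
qed

lemma finite_comm_heights: "finite {comm_height E H x y | x y. x \<in> A \<and> (y::'a::finite) \<in> B}"
  by (rule finite_subset[of _ "range (\<lambda>(x, y). comm_height E H x y)"]) auto

lemma comm_height_set_le:
  "x \<in> A \<Longrightarrow> (y::'a::finite) \<in> B \<Longrightarrow> comm_height_set E H A B \<le> comm_height E H x y"
  unfolding comm_height_set_def by (rule Min_le[OF finite_comm_heights]) auto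

lemma comm_height_set_attained:
  assumes "A \<noteq> {}" "B \<noteq> {}"
  obtains x y where "x \<in> A" "(y::'a::finite) \<in> B" "comm_height_set E H A B = comm_height E H x y"
proof -
  have "{comm_height E H x y | x y. x \<in> A \<and> y \<in> B} \<noteq> {}" using assms by auto
  then have "comm_height_set E H A B \<in> {comm_height E H x y | x y. x \<in> A \<and> y \<in> B}"
    unfolding comm_height_set_def by (rule Min_in[OF finite_comm_heights])
  then show ?thesis using that by auto
qed

lemma comm_height_set_singleton_less_iff:
  assumes "A \<noteq> {}"
  shows "comm_height_set E H A {y::'a::finite} < c \<longleftrightarrow> (\<exists>x\<in>A. comm_height E H x y < c)"
proof
  assume "comm_height_set E H A {y} < c"
  moreover obtain x where "x \<in> A" "comm_height_set E H A {y} = comm_height E H x y"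
    using comm_height_set_attained[OF assms, of "{y}"] by blast
  ultimately show "\<exists>x\<in>A. comm_height E H x y < c" by auto
next
  assume "\<exists>x\<in>A. comm_height E H x y < c"
  then obtain x where "x \<in> A" "comm_height E H x y < c" ..
  then show "comm_height_set E H A {y} < c"
    using comm_height_set_le[of x A y "{y}" E H] by simp
qed

definition basin :: "('a \<Rightarrow> 'a \<Rightarrow> bool) \<Rightarrow> ('a \<Rightarrow> real) \<Rightarrow> 'a set \<Rightarrow> real \<Rightarrow> 'a set" where
  "basin E H P c = {x. comm_height_set E H P {x} < c}"

lemma mem_basin_iff:
  "P \<noteq> {} \<Longrightarrow> x \<in> basin E H P c \<longleftrightarrow> (\<exists>p\<in>P. comm_height E H p (x::'a::finite) < c)"
  unfolding basin_def by (simp add: comm_height_set_singleton_less_iff)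

section \<open>Stable plateaux\<close>

lemma Hval_stable_plateau: "stable_plateau E H P \<Longrightarrow> p \<in> P \<Longrightarrow> Hval H P = H p"
  unfolding stable_plateau_def Hval_def by (metis some_in_eq empty_iff)

context
  fixes E :: "'a \<Rightarrow> 'a \<Rightarrow> bool"
  assumes sym: "\<And>x y. E x y \<Longrightarrow> E y x"
begin

lemma is_path_exit_boundary:
  assumes "is_path E w x y" "x \<in> A" "y \<notin> A"
  obtains b where "b \<in> boundary E A" "b \<in> set w"
proof -
  obtain a b where "a \<in> A" "b \<notin> A" "E a b" "b \<in> set w" by (rule is_path_exit_edge[OF assms])
  then show ?thesis using that sym unfolding boundary_def by blast
qed

lemma set_connected_if_reachable_from_hub:
  assumes "set_connected E P" "P \<subseteq> A"
    and reach: "\<And>x. x \<in> A \<Longrightarrow> \<exists>p\<in>P. \<exists>w. is_path E w p x \<and> set w \<subseteq> A"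
  shows "set_connected E A"
  unfolding set_connected_def
proof (intro ballI)
  fix x y assume "x \<in> A" "y \<in> A"
  obtain px wx where x: "px \<in> P" "is_path E wx px x" "set wx \<subseteq> A" using reach[OF \<open>x \<in> A\<close>] by blast
  obtain py wy where y: "py \<in> P" "is_path E wy py y" "set wy \<subseteq> A" using reach[OF \<open>y \<in> A\<close>] by blast
  obtain u where u: "is_path E u px py" "set u \<subseteq> P"
    using assms(1) x(1) y(1) unfolding set_connected_def by blast
  have "is_path E ((rev wx @ tl u) @ tl wy) x y"
    by (rule is_path_append[OF is_path_append[OF is_path_rev[OF sym x(2)] u(1)] y(2)])
  moreover have "set ((rev wx @ tl u) @ tl wy) \<subseteq> A"
    using set_tl_subset[of u] set_tl_subset[of wy] x(3) y(3) u(2) assms(2) by auto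
  ultimately show "\<exists>w. is_path E w x y \<and> set w \<subseteq> A" by blast
qed

lemma stable_plateau_subset:
  assumes "stable_plateau E H P" "stable_plateau E H Q" "q \<in> P" "q \<in> Q"
  shows "Q \<subseteq> P"
proof
  fix y assume "y \<in> Q"
  show "y \<in> P"
  proof (rule ccontr)
    assume "y \<notin> P"
    obtain w where w: "is_path E w q y" "set w \<subseteq> Q"
      using assms(2,4) \<open>y \<in> Q\<close> unfolding stable_plateau_def set_connected_def by blast
    obtain b where b: "b \<in> boundary E P" "b \<in> set w"
      by (rule is_path_exit_boundary[OF w(1) assms(3) \<open>y \<notin> P\<close>])
    have "H q < H b"
      using assms(1) b(1) Hval_stable_plateau[OF assms(1,3)] unfolding stable_plateau_def by simp
    moreover have "H b = H q"
      using assms(2,4) b(2) w(2) unfolding stable_plateau_def by blast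
    ultimately show False by simp
  qed
qed

lemma stable_plateaux_eq_if_meet:
  "stable_plateau E H P \<Longrightarrow> stable_plateau E H Q \<Longrightarrow> q \<in> P \<Longrightarrow> q \<in> Q \<Longrightarrow> P = Q"
  using stable_plateau_subset by blast

text \<open>An edge leaving the flat component of x0 in C either leaves C, or stays in C and so goes
  strictly up.\<close>

lemma flat_component_stable_plateau:
  assumes "x0 \<in> C" and min: "\<And>y. y \<in> C \<Longrightarrow> H x0 \<le> H y"
    and bd: "\<And>z. z \<in> boundary E C \<Longrightarrow> H x0 < H z"
  obtains Q where "stable_plateau E H Q" "x0 \<in> Q" "Q \<subseteq> C"
proof -
  define L where "L = {y \<in> C. H y = H x0}"
  define Q where "Q = {y. \<exists>w. is_path E w x0 y \<and> set w \<subseteq> L}"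
  have x0Q: "x0 \<in> Q"
    unfolding Q_def L_def using is_path_singleton[of E x0] \<open>x0 \<in> C\<close> by auto
  have QL: "Q \<subseteq> L"
    unfolding Q_def using is_path_ends_in_set(2) by fast
  have path_in_Q: "set w \<subseteq> Q" if w: "is_path E w x0 y" "set w \<subseteq> L" for w y
  proof
    fix z assume "z \<in> set w"
    with w(1) obtain w' where "is_path E w' x0 z" "set w' \<subseteq> set w" by (rule is_path_prefix)
    with w(2) show "z \<in> Q" unfolding Q_def by blast
  qed
  have Q_connected: "set_connected E Q"
  proof (rule set_connected_if_reachable_from_hub[of "{x0}"])
    show "set_connected E {x0}" unfolding set_connected_def using is_path_singleton by fastforce
    show "\<exists>p\<in>{x0}. \<exists>w. is_path E w p y \<and> set w \<subseteq> Q" if "y \<in> Q" for y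
      using \<open>y \<in> Q\<close> path_in_Q unfolding Q_def by blast
  qed (use x0Q in simp)
  have Q_boundary: "H x0 < H z" if z: "z \<in> boundary E Q" for z
  proof -
    obtain y where zy: "z \<notin> Q" "y \<in> Q" "E z y" using z unfolding boundary_def by blast
    show ?thesis
    proof (cases "z \<in> C")
      case True
      obtain w where w: "is_path E w x0 y" "set w \<subseteq> L" using zy(2) unfolding Q_def by blast
      have "is_path E (w @ [z]) x0 z"
        using is_path_append[OF w(1) is_path_edge[of E y z, OF sym[OF zy(3)]]] by simp
      moreover have "set (w @ [z]) \<subseteq> L" if "z \<in> L" using w(2) that by simp
      ultimately have "z \<notin> L" using zy(1) unfolding Q_def by blast
      then show ?thesis using min[OF True] True unfolding L_def by fastforce
    next
      case False
      then have "z \<in> boundary E C" using zy QL unfolding boundary_def L_def by blast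
      then show ?thesis by (rule bd)
    qed
  qed
  have Q_flat: "H y = H x0" if "y \<in> Q" for y using that QL unfolding L_def by blast
  have "Hval H Q = H x0"
    unfolding Hval_def using someI[of "\<lambda>y. y \<in> Q", OF x0Q] Q_flat by blast
  then have "stable_plateau E H Q"
    unfolding stable_plateau_def using x0Q Q_connected Q_boundary Q_flat by (metis empty_iff)
  then show ?thesis using that x0Q QL unfolding L_def by blast
qed

end

lemma V1_eq_basin: "V1 E H P = basin E H P (comm_height_set E H P (breve1 E H P))"
  unfolding V1_def Gamma1_def basin_def by simp

lemma plateaux1_stable: "P \<in> plateaux1 E H \<Longrightarrow> stable_plateau E H P"
  unfolding plateaux1_def by blast

lemma plateaux1_nonempty: "P \<in> plateaux1 E H \<Longrightarrow> P \<noteq> {}"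
  unfolding plateaux1_def stable_plateau_def by blast

lemma breve1_height_le:
  assumes "R \<in> plateaux1 E H" "R \<noteq> P" "p \<in> P" "q \<in> R"
  shows "comm_height_set E H P (breve1 E H P) \<le> comm_height E H p (q::'a::finite)"
  using assms by (intro comm_height_set_le) (auto simp: breve1_def)

lemma breve1_height_attained:
  assumes "P \<in> plateaux1 E H" "R \<in> plateaux1 E H" "R \<noteq> P"
  obtains p R' q where "p \<in> P" "R' \<in> plateaux1 E H" "R' \<noteq> P" "q \<in> R'"
    "comm_height_set E H P (breve1 E H P) = comm_height E H p (q::'a::finite)"
proof -
  have "breve1 E H P \<noteq> {}"
    using assms(2,3) plateaux1_nonempty[OF assms(2)] unfolding breve1_def by blast
  then obtain p q where "p \<in> P" "q \<in> breve1 E H P"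
      "comm_height_set E H P (breve1 E H P) = comm_height E H p q"
    using comm_height_set_attained[OF plateaux1_nonempty[OF assms(1)]] by metis
  then show ?thesis using that unfolding breve1_def by blast
qed

context
  fixes E :: "'a::finite \<Rightarrow> 'a \<Rightarrow> bool" and H :: "'a \<Rightarrow> real"
  assumes sym: "\<And>x y. E x y \<Longrightarrow> E y x" and conn: "graph_connected E"
begin

abbreviation \<Phi> :: "'a \<Rightarrow> 'a \<Rightarrow> real" where
  "\<Phi> \<equiv> comm_height E H"

lemma comm_height_trans: "\<Phi> x z \<le> max (\<Phi> x y) (\<Phi> y z)"
proof -
  obtain w where w: "is_path E w x y" "path_height H w = \<Phi> x y" by (rule comm_height_attained[OF conn])
  obtain v where v: "is_path E v y z" "path_height H v = \<Phi> y z" by (rule comm_height_attained[OF conn])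
  have "\<Phi> x z \<le> path_height H (w @ tl v)"
    by (rule comm_height_le_path_height[OF is_path_append[OF w(1) v(1)]])
  also have "\<dots> \<le> max (path_height H w) (path_height H v)"
    using w(1) path_height_append_tl[of w H v] by (simp add: is_path_def)
  also have "\<dots> = max (\<Phi> x y) (\<Phi> y z)" using w(2) v(2) by simp
  finally show ?thesis .
qed

lemma comm_height_commute: "\<Phi> x y = \<Phi> y x"
proof -
  have "\<Phi> x y \<le> \<Phi> y x" for x y
  proof -
    obtain w where w: "is_path E w y x" "path_height H w = \<Phi> y x" by (rule comm_height_attained[OF conn])
    have "\<Phi> x y \<le> path_height H (rev w)" by (rule comm_height_le_path_height[OF is_path_rev[OF sym w(1)]])
    then show ?thesis using w(2) by (simp add: path_height_def)
  qed
  then show ?thesis by (meson antisym)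
qed

lemma comm_height_refl_le: "\<Phi> x x \<le> H x"
  using comm_height_le_path_height[OF is_path_singleton[of E x], of H] by (simp add: path_height_def)

lemma comm_height_edge_le: "E x y \<Longrightarrow> \<Phi> x y \<le> max (H x) (H y)"
  using comm_height_le_path_height[OF is_path_edge[of E x y], of H] by (simp add: path_height_def)

lemma height_le_comm_height: "H x \<le> \<Phi> x y" "H y \<le> \<Phi> x y"
proof -
  obtain w where w: "is_path E w x y" "path_height H w = \<Phi> x y" by (rule comm_height_attained[OF conn])
  then show "H x \<le> \<Phi> x y" "H y \<le> \<Phi> x y"
    using path_height_ge[of _ w H] is_path_ends_in_set[OF w(1)] by auto
qed

lemma stable_plateau_exit_height:
  assumes "stable_plateau E H P" "x \<in> P" "y \<notin> P"
  shows "Hval H P < \<Phi> x y"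
proof -
  obtain w where w: "is_path E w x y" "path_height H w = \<Phi> x y" by (rule comm_height_attained[OF conn])
  obtain b where b: "b \<in> boundary E P" "b \<in> set w"
    by (rule is_path_exit_boundary[OF sym w(1) assms(2,3)])
  have "Hval H P < H b" using assms(1) b(1) unfolding stable_plateau_def by blast
  also have "\<dots> \<le> \<Phi> x y" using path_height_ge[OF b(2), of H] w(2) by simp
  finally show ?thesis .
qed

lemma ground_states_nonempty: "ground_states H \<noteq> {}"
proof -
  obtain s where "is_arg_min H (\<lambda>x. x \<in> UNIV) s"
    using ex_is_arg_min_if_finite[OF finite_UNIV UNIV_not_empty] ..
  then have "s \<in> ground_states H" unfolding ground_states_def is_arg_min_linorder by simp
  then show ?thesis by blast
qed

lemma comm_height_le_Phi_bar:
  assumes "s \<in> ground_states H" "s' \<in> ground_states H"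
  shows "\<Phi> s s' \<le> Phi_bar E H"
proof -
  have "finite {\<Phi> s s' | s s'. s \<in> ground_states H \<and> s' \<in> ground_states H}"
    by (rule finite_subset[of _ "range (\<lambda>(x, y). \<Phi> x y)"]) auto
  then show ?thesis unfolding Phi_bar_def using assms by (auto intro: Max_ge)
qed

lemma Omega_bar_iff: "x \<in> Omega_bar E H \<longleftrightarrow> (\<exists>s\<in>ground_states H. \<Phi> s x \<le> Phi_bar E H)"
proof
  assume "x \<in> Omega_bar E H"
  moreover obtain s where "s \<in> ground_states H" "comm_height_set E H (ground_states H) {x} = \<Phi> s x"
    using comm_height_set_attained[OF ground_states_nonempty, of "{x}"] by blast
  ultimately show "\<exists>s\<in>ground_states H. \<Phi> s x \<le> Phi_bar E H" unfolding Omega_bar_def by auto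
next
  assume "\<exists>s\<in>ground_states H. \<Phi> s x \<le> Phi_bar E H"
  then show "x \<in> Omega_bar E H"
    unfolding Omega_bar_def using comm_height_set_le[of _ "ground_states H" x "{x}" E H] by force
qed

lemma comm_height_Omega_bar_le:
  assumes "x \<in> Omega_bar E H" "y \<in> Omega_bar E H"
  shows "\<Phi> x y \<le> Phi_bar E H"
proof -
  obtain s where s: "s \<in> ground_states H" "\<Phi> s x \<le> Phi_bar E H" using assms(1) Omega_bar_iff by blast
  obtain s' where s': "s' \<in> ground_states H" "\<Phi> s' y \<le> Phi_bar E H" using assms(2) Omega_bar_iff by blast
  have "\<Phi> x y \<le> max (\<Phi> x s) (max (\<Phi> s s') (\<Phi> s' y))"
    using comm_height_trans[of x y s] comm_height_trans[of s y s'] by linarith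
  then show ?thesis
    using s s' comm_height_le_Phi_bar[OF s(1) s'(1)] comm_height_commute[of x s] by linarith
qed

lemma Omega_bar_comm_height_closed:
  assumes "x \<in> Omega_bar E H" "\<Phi> x y \<le> Phi_bar E H"
  shows "y \<in> Omega_bar E H"
proof -
  obtain s where s: "s \<in> ground_states H" "\<Phi> s x \<le> Phi_bar E H" using assms(1) Omega_bar_iff by blast
  have "\<Phi> s y \<le> Phi_bar E H" using comm_height_trans[of s y x] s(2) assms(2) by linarith
  then show ?thesis using s(1) Omega_bar_iff by blast
qed

section \<open>Basins of plateaux\<close>

lemma basin_height_less:
  assumes "P \<noteq> {}" "x \<in> basin E H P c"
  shows "H x < c"
proof -
  obtain p where "p \<in> P" "\<Phi> p x < c" using assms by (auto simp: mem_basin_iff)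
  then show ?thesis using height_le_comm_height(2)[where x = p and y = x] by simp
qed

lemma subset_basin:
  assumes "\<And>p. p \<in> P \<Longrightarrow> H p < c"
  shows "P \<subseteq> basin E H P c"
proof
  fix p assume "p \<in> P"
  moreover have "\<Phi> p p < c" using assms[OF \<open>p \<in> P\<close>] comm_height_refl_le[of p] by simp
  moreover have "P \<noteq> {}" using \<open>p \<in> P\<close> by blast
  ultimately show "p \<in> basin E H P c" by (auto simp: mem_basin_iff)
qed

text \<open>An optimal path from P to a point of the basin stays below its height, hence in the basin.\<close>

lemma basin_reachable:
  assumes "P \<noteq> {}" "x \<in> basin E H P c"
  shows "\<exists>p\<in>P. \<exists>w. is_path E w p x \<and> set w \<subseteq> basin E H P c"
proof -
  obtain p where p: "p \<in> P" "\<Phi> p x < c" using assms by (auto simp: mem_basin_iff)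
  obtain w where w: "is_path E w p x" "path_height H w = \<Phi> p x" by (rule comm_height_attained[OF conn])
  have "z \<in> basin E H P c" if z: "z \<in> set w" for z
  proof -
    obtain w' where w': "is_path E w' p z" "set w' \<subseteq> set w" by (rule is_path_prefix[OF w(1) z])
    have "\<Phi> p z \<le> path_height H w'" by (rule comm_height_le_path_height[OF w'(1)])
    also have "\<dots> \<le> path_height H w" using w'(1,2) by (intro path_height_mono) (auto simp: is_path_def)
    also have "\<dots> < c" using p(2) w(2) by simp
    finally show ?thesis unfolding mem_basin_iff[OF assms(1)] using p(1) by blast
  qed
  then show ?thesis using p(1) w(1) by blast
qed

lemma basin_boundary_height:
  assumes "P \<noteq> {}" "z \<in> boundary E (basin E H P c)"
  shows "c \<le> H z"
proof (rule ccontr)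
  assume "\<not> c \<le> H z"
  obtain y where y: "z \<notin> basin E H P c" "y \<in> basin E H P c" "E y z"
    using assms(2) sym unfolding boundary_def by blast
  obtain p where p: "p \<in> P" "\<Phi> p y < c" using y(2) assms(1) by (auto simp: mem_basin_iff)
  have "\<Phi> p z \<le> max (\<Phi> p y) (max (H y) (H z))"
    using comm_height_trans[of p z y] comm_height_edge_le[OF y(3)] by linarith
  then have "\<Phi> p z < c"
    using p(2) height_le_comm_height(2)[where x = p and y = y] \<open>\<not> c \<le> H z\<close> by linarith
  then show False using y(1) p(1) unfolding mem_basin_iff[OF assms(1)] by blast
qed

lemma is_cycle_basin:
  assumes "P \<noteq> {}" "set_connected E P" "\<And>p. p \<in> P \<Longrightarrow> H p < c"
  shows "is_cycle E H (basin E H P c)"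
proof -
  have "P \<subseteq> basin E H P c" by (rule subset_basin[OF assms(3)])
  moreover have "set_connected E (basin E H P c)"
    by (rule set_connected_if_reachable_from_hub[OF sym assms(2) \<open>P \<subseteq> _\<close> basin_reachable[OF assms(1)]])
  ultimately show ?thesis
    using assms(1) basin_height_less[OF assms(1)] basin_boundary_height[OF assms(1)]
    unfolding is_cycle_def by fastforce
qed

text \<open>An optimal path from p to q leaves the basin through a boundary point of height at most c.\<close>

lemma Min_height_boundary_basin:
  assumes "p \<in> P" "q \<notin> basin E H P c" "\<Phi> p q \<le> c" "\<And>p. p \<in> P \<Longrightarrow> H p < c"
  shows "Min (H ` boundary E (basin E H P c)) = c"
proof (rule Min_eqI)
  show "c \<le> y" if "y \<in> H ` boundary E (basin E H P c)" for y
    using that basin_boundary_height assms(1) by blast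
  obtain w where w: "is_path E w p q" "path_height H w = \<Phi> p q" by (rule comm_height_attained[OF conn])
  have p: "p \<in> basin E H P c" using subset_basin assms(1,4) by blast
  obtain b where b: "b \<in> boundary E (basin E H P c)" "b \<in> set w"
    by (rule is_path_exit_boundary[OF sym w(1) p assms(2)])
  have "H b \<le> c" using path_height_ge[OF b(2), of H] w(2) assms(3) by simp
  then have "H b = c" using basin_boundary_height[OF _ b(1)] assms(1) by fastforce
  then show "c \<in> H ` boundary E (basin E H P c)" using b(1) by blast
qed simp

section \<open>The initial cycles\<close>

lemma plateaux1_disjoint_V1:
  assumes "P \<in> plateaux1 E H" "R \<in> plateaux1 E H" "R \<noteq> P"
  shows "R \<inter> V1 E H P = {}"
proof -
  have "q \<notin> V1 E H P" if "q \<in> R" for q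
  proof
    assume "q \<in> V1 E H P"
    then obtain p where "p \<in> P" "\<Phi> p q < comm_height_set E H P (breve1 E H P)"
      using plateaux1_nonempty[OF assms(1)] by (auto simp: V1_eq_basin mem_basin_iff)
    with breve1_height_le[OF assms(2,3) _ that] show False by fastforce
  qed
  then show ?thesis by blast
qed

lemma Hval_less_breve1_height:
  assumes "P \<in> plateaux1 E H" "R \<in> plateaux1 E H" "R \<noteq> P"
  shows "Hval H P < comm_height_set E H P (breve1 E H P)"
proof -
  obtain p R' q where pq: "p \<in> P" "R' \<in> plateaux1 E H" "R' \<noteq> P" "q \<in> R'"
    "comm_height_set E H P (breve1 E H P) = \<Phi> p q"
    by (rule breve1_height_attained[OF assms])
  have "q \<notin> P"
    using stable_plateaux_eq_if_meet[OF sym plateaux1_stable[OF assms(1)] plateaux1_stable[OF pq(2)]] pq(3,4)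
    by blast
  then show ?thesis using stable_plateau_exit_height[OF plateaux1_stable[OF assms(1)] pq(1)] pq(5) by simp
qed

lemma height_less_breve1_height:
  assumes "P \<in> plateaux1 E H" "R \<in> plateaux1 E H" "R \<noteq> P" "p \<in> P"
  shows "H p < comm_height_set E H P (breve1 E H P)"
  using Hval_less_breve1_height[OF assms(1-3)] Hval_stable_plateau[OF plateaux1_stable[OF assms(1)] assms(4)]
  by simp

lemma breve1_height_le_Phi_bar:
  assumes "P \<in> plateaux1 E H" "R \<in> plateaux1 E H" "R \<noteq> P"
  shows "comm_height_set E H P (breve1 E H P) \<le> Phi_bar E H"
proof -
  obtain p R' q where pq: "p \<in> P" "R' \<in> plateaux1 E H" "R' \<noteq> P" "q \<in> R'"
    "comm_height_set E H P (breve1 E H P) = \<Phi> p q"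
    by (rule breve1_height_attained[OF assms])
  have "p \<in> Omega_bar E H" "q \<in> Omega_bar E H"
    using assms(1) pq(1,2,4) unfolding plateaux1_def by blast+
  then show ?thesis using comm_height_Omega_bar_le pq(5) by simp
qed

lemma V1_subset_Omega_bar:
  assumes "P \<in> plateaux1 E H" "R \<in> plateaux1 E H" "R \<noteq> P"
  shows "V1 E H P \<subseteq> Omega_bar E H"
proof
  fix x assume "x \<in> V1 E H P"
  then obtain p where p: "p \<in> P" "\<Phi> p x < comm_height_set E H P (breve1 E H P)"
    using plateaux1_nonempty[OF assms(1)] by (auto simp: V1_eq_basin mem_basin_iff)
  have "p \<in> Omega_bar E H" using assms(1) p(1) unfolding plateaux1_def by blast
  moreover have "\<Phi> p x \<le> Phi_bar E H" using p(2) breve1_height_le_Phi_bar[OF assms] by simp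
  ultimately show "x \<in> Omega_bar E H" by (rule Omega_bar_comm_height_closed)
qed

text \<open>A common point x would give \<Phi>(p, q) \<le> max (\<Phi>(p, x), \<Phi>(x, q)), below both levels.\<close>

lemma V1_disjoint:
  assumes "P \<in> plateaux1 E H" "Q \<in> plateaux1 E H" "P \<noteq> Q"
  shows "V1 E H P \<inter> V1 E H Q = {}"
proof (rule ccontr)
  assume "V1 E H P \<inter> V1 E H Q \<noteq> {}"
  then obtain x where "x \<in> V1 E H P" "x \<in> V1 E H Q" by blast
  then obtain p q where pq: "p \<in> P" "\<Phi> p x < comm_height_set E H P (breve1 E H P)"
    "q \<in> Q" "\<Phi> q x < comm_height_set E H Q (breve1 E H Q)"
    using plateaux1_nonempty[OF assms(1)] plateaux1_nonempty[OF assms(2)]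
    by (auto simp: V1_eq_basin mem_basin_iff)
  have "comm_height_set E H P (breve1 E H P) \<le> \<Phi> p q"
    using assms(3) by (intro breve1_height_le[OF assms(2) _ pq(1,3)]) simp
  moreover have "comm_height_set E H Q (breve1 E H Q) \<le> \<Phi> q p"
    by (rule breve1_height_le[OF assms(1,3) pq(3,1)])
  moreover have "\<Phi> p q \<le> max (\<Phi> p x) (\<Phi> q x)"
    using comm_height_trans[of p q x] comm_height_commute[of x q] by simp
  ultimately show False using pq(2,4) comm_height_commute[of p q] by linarith
qed

lemma is_cycle_V1:
  assumes "P \<in> plateaux1 E H" "R \<in> plateaux1 E H" "R \<noteq> P"
  shows "is_cycle E H (V1 E H P)"
proof -
  have "set_connected E P" using plateaux1_stable[OF assms(1)] unfolding stable_plateau_def by blast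
  then show ?thesis
    unfolding V1_eq_basin
    by (rule is_cycle_basin[OF plateaux1_nonempty[OF assms(1)] _ height_less_breve1_height[OF assms]])
qed

text \<open>A minimiser of H on V1 lies in a stable plateau inside V1, which can only be P.\<close>

lemma minimiser_V1_in_plateau:
  assumes "P \<in> plateaux1 E H" "R \<in> plateaux1 E H" "R \<noteq> P"
    and "x0 \<in> V1 E H P" "\<And>y. y \<in> V1 E H P \<Longrightarrow> H x0 \<le> H y"
  shows "x0 \<in> P"
proof -
  have "H x0 < H z" if "z \<in> boundary E (V1 E H P)" for z
  proof -
    have "H x0 < comm_height_set E H P (breve1 E H P)"
      using basin_height_less[OF plateaux1_nonempty[OF assms(1)]] assms(4) unfolding V1_eq_basin .
    also have "\<dots> \<le> H z"
      using basin_boundary_height[OF plateaux1_nonempty[OF assms(1)]] that unfolding V1_eq_basin .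
    finally show ?thesis .
  qed
  then obtain Q where Q: "stable_plateau E H Q" "x0 \<in> Q" "Q \<subseteq> V1 E H P"
    using flat_component_stable_plateau[of E x0 "V1 E H P" H, OF sym assms(4,5)] by blast
  then have "Q \<in> plateaux1 E H"
    using V1_subset_Omega_bar[OF assms(1-3)] unfolding plateaux1_def by blast
  then have "Q = P" using plateaux1_disjoint_V1[OF assms(1)] Q(2,3) by blast
  then show ?thesis using Q(2) by simp
qed

lemma bottom_V1:
  assumes "P \<in> plateaux1 E H" "R \<in> plateaux1 E H" "R \<noteq> P"
  shows "bottom H (V1 E H P) = P"
proof -
  have P_V1: "P \<subseteq> V1 E H P"
    unfolding V1_eq_basin by (rule subset_basin[OF height_less_breve1_height[OF assms]])
  obtain x0 where "is_arg_min H (\<lambda>x. x \<in> V1 E H P) x0"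
    using ex_is_arg_min_if_finite[OF finite, of "V1 E H P" H] P_V1 plateaux1_nonempty[OF assms(1)] by blast
  then have x0: "x0 \<in> V1 E H P" "\<And>y. y \<in> V1 E H P \<Longrightarrow> H x0 \<le> H y"
    unfolding is_arg_min_linorder by auto
  have "x0 \<in> P" by (rule minimiser_V1_in_plateau[OF assms x0])
  show ?thesis
  proof
    show "bottom H (V1 E H P) \<subseteq> P"
      using minimiser_V1_in_plateau[OF assms] unfolding bottom_def by blast
    show "P \<subseteq> bottom H (V1 E H P)"
    proof
      fix p assume "p \<in> P"
      then have "H p = H x0"
        using \<open>x0 \<in> P\<close> plateaux1_stable[OF assms(1)] unfolding stable_plateau_def by blast
      then show "p \<in> bottom H (V1 E H P)" using \<open>p \<in> P\<close> P_V1 x0(2) unfolding bottom_def by auto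
    qed
  qed
qed

lemma cycle_depth_V1:
  assumes "P \<in> plateaux1 E H" "R \<in> plateaux1 E H" "R \<noteq> P"
  shows "cycle_depth E H (V1 E H P) = Gamma1 E H P"
proof -
  define c where "c = comm_height_set E H P (breve1 E H P)"
  obtain p R' q where pq: "p \<in> P" "R' \<in> plateaux1 E H" "R' \<noteq> P" "q \<in> R'" "c = \<Phi> p q"
    unfolding c_def by (rule breve1_height_attained[OF assms])
  have "q \<notin> basin E H P c"
    using plateaux1_disjoint_V1[OF assms(1) pq(2,3)] pq(4) unfolding V1_eq_basin c_def by blast
  moreover note height_less_breve1_height[OF assms, folded c_def]
  ultimately have "Min (H ` boundary E (V1 E H P)) = c"
    unfolding V1_eq_basin c_def[symmetric] using pq(1,5) by (intro Min_height_boundary_basin) auto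
  moreover have "Min (H ` V1 E H P) = H p"
    using bottom_V1[OF assms] pq(1) unfolding bottom_def by (intro Min_eqI) auto
  ultimately show ?thesis
    using Hval_stable_plateau[OF plateaux1_stable[OF assms(1)] pq(1)]
    unfolding cycle_depth_def Gamma1_def c_def by simp
qed

end

theorem mainTheorem2:
  fixes E :: "'a::finite \<Rightarrow> 'a \<Rightarrow> bool" and H :: "'a \<Rightarrow> real"
  assumes sym: "\<And>x y. E x y \<Longrightarrow> E y x"
    and conn: "graph_connected E"
    and nu0: "card (plateaux1 E H) \<ge> 2"
  shows "(\<forall>P \<in> plateaux1 E H. \<forall>Q \<in> plateaux1 E H. P \<noteq> Q \<longrightarrow> V1 E H P \<inter> V1 E H Q = {})
    \<and> (\<forall>P \<in> plateaux1 E H.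
         is_cycle E H (V1 E H P) \<and> V1 E H P \<subseteq> Omega_bar E H
         \<and> bottom H (V1 E H P) = P
         \<and> cycle_depth E H (V1 E H P) = Gamma1 E H P)"
proof (intro conjI ballI impI)
  fix P Q assume "P \<in> plateaux1 E H" "Q \<in> plateaux1 E H" "P \<noteq> Q"
  then show "V1 E H P \<inter> V1 E H Q = {}" using V1_disjoint[OF sym conn] by blast
next
  fix P assume P: "P \<in> plateaux1 E H"
  have "\<not> plateaux1 E H \<subseteq> {P}"
    using card_mono[of "{P}" "plateaux1 E H"] nu0 by auto
  then obtain R where R: "R \<in> plateaux1 E H" "R \<noteq> P" by blast
  show "is_cycle E H (V1 E H P)" by (rule is_cycle_V1[OF sym conn P R])
  show "V1 E H P \<subseteq> Omega_bar E H" by (rule V1_subset_Omega_bar[OF sym conn P R])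
  show "bottom H (V1 E H P) = P" by (rule bottom_V1[OF sym conn P R])
  show "cycle_depth E H (V1 E H P) = Gamma1 E H P" by (rule cycle_depth_V1[OF sym conn P R])
qed

end
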